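(* Let $\iota:\emptyset\to\{\bullet\}$. Then, in $\mathrm{Top}$, $\{\iota\}^{rr}$ is the class of subspace embeddings, i.e. injective continuous maps $A\to B$ such that the topology on $A$ is induced from $B$.
   Context: For continuous maps $f:A\to B$, $g:C\to D$, $f\pitchfork g$ means: for all continuous $t:A\to C$, $b:B\to D$ with $g\circ t=b\circ f$ there is continuous $d:B\to C$ with $d\circ f=t$, $g\circ d=b$. For a class $P$, $P^r=\{g: f\pitchfork g\ \forall f\in P\}$, and $P^{rr}=(P^r)^r$. *)

theory Defs
  imports "HOL-Analysis.Analysis"
begin

text \<open>Lifting property f \<pitchfork> g for continuous maps f : A \<rightarrow> B, g : C \<rightarrow> D
  (maps represented on the carriers topspace; compositions compared on carriers).\<close>
definition lifting_prop ::
  "'a topology \<Rightarrow> 'b topology \<Rightarrow> ('a \<Rightarrow> 'b) \<Rightarrow> 'c topology \<Rightarrow> 'd topology \<Rightarrow> ('c \<Rightarrow> 'd) \<Rightarrow> bool" where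
  "lifting_prop A B f C D g \<longleftrightarrow>
     (\<forall>t b. continuous_map A C t \<and> continuous_map B D b \<and>
            (\<forall>x\<in>topspace A. g (t x) = b (f x)) \<longrightarrow>
       (\<exists>d. continuous_map B C d \<and> (\<forall>x\<in>topspace A. d (f x) = t x) \<and>
            (\<forall>y\<in>topspace B. g (d y) = b y)))"

definition iota_dom :: "unit topology" where "iota_dom = trivial_topology"
definition iota_cod :: "unit topology" where "iota_cod = discrete_topology {()}"
definition iota :: "unit \<Rightarrow> unit" where "iota = (\<lambda>x. x)"

definition in_iota_r :: "'c topology \<Rightarrow> 'd topology \<Rightarrow> ('c \<Rightarrow> 'd) \<Rightarrow> bool" where
  "in_iota_r C D g \<longleftrightarrow> continuous_map C D g \<and> lifting_prop iota_dom iota_cod iota C D g"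

text \<open>Membership of h : X \<rightarrow> Y in {\<iota>}^{rr}, where the class {\<iota>}^r is
  restricted to maps whose domain/codomain live in the types 'a / 'b.\<close>
definition in_iota_rr ::
  "'a itself \<Rightarrow> 'b itself \<Rightarrow> 'c topology \<Rightarrow> 'd topology \<Rightarrow> ('c \<Rightarrow> 'd) \<Rightarrow> bool" where
  "in_iota_rr _ _ X Y h \<longleftrightarrow> continuous_map X Y h \<and>
     (\<forall>(A::'a topology) (B::'b topology) f. in_iota_r A B f \<longrightarrow> lifting_prop A B f X Y h)"

end

theory Submission
  imports Defs
begin

text \<open>Lifting against \<iota> : \<emptyset> \<rightarrow> {\<bullet>} just says that every point of the codomain has a preimage,
  so {\<iota>}^r consists of the surjections. An embedding h lifts against any surjection f: the
  bottom map b lands in the image of h, and composing it with the continuous inverse of h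
  on its image gives the lift. Conversely, the corestriction of h onto its image is a
  surjection, so h \<in> {\<iota>}^{rr} lifts against it; the lift of the square formed by the identity
  of X and the inclusion of the image is a continuous inverse of that corestriction.\<close>

lemma continuous_map_iota_dom: "continuous_map iota_dom C t"
  by (simp add: iota_dom_def)

lemma continuous_map_iota_cod: "continuous_map iota_cod D b \<longleftrightarrow> b () \<in> topspace D"
  by (simp add: iota_cod_def)

lemma lifting_prop_iota_iff_surjective:
  "lifting_prop iota_dom iota_cod iota C D g \<longleftrightarrow> topspace D \<subseteq> g ` topspace C"
proof
  assume lift: "lifting_prop iota_dom iota_cod iota C D g"
  show "topspace D \<subseteq> g ` topspace C"
  proof
    fix y assume "y \<in> topspace D"
    then have "continuous_map iota_cod D (\<lambda>_. y)"
      by (simp add: continuous_map_iota_cod)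
    moreover have "\<forall>x\<in>topspace iota_dom. g undefined = y"
      by (simp add: iota_dom_def)
    ultimately obtain d where "continuous_map iota_cod C d" "\<forall>z\<in>topspace iota_cod. g (d z) = y"
      using lift[unfolded lifting_prop_def, rule_format, of "\<lambda>_. undefined" "\<lambda>_. y"]
        continuous_map_iota_dom by blast
    then show "y \<in> g ` topspace C"
      by (auto simp: continuous_map_iota_cod iota_cod_def)
  qed
next
  assume surj: "topspace D \<subseteq> g ` topspace C"
  show "lifting_prop iota_dom iota_cod iota C D g"
    unfolding lifting_prop_def
  proof (intro allI impI, elim conjE)
    fix t b assume "continuous_map iota_cod D b"
    with surj obtain x where "x \<in> topspace C" "g x = b ()"
      by (auto simp: continuous_map_iota_cod)
    then show "\<exists>d. continuous_map iota_cod C d \<and> (\<forall>x\<in>topspace iota_dom. d (iota x) = t x)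
        \<and> (\<forall>y\<in>topspace iota_cod. g (d y) = b y)"
      by (intro exI[of _ "\<lambda>_. x"]) (simp add: continuous_map_iota_cod iota_dom_def iota_cod_def)
  qed
qed

lemma in_iota_r_iff:
  "in_iota_r C D g \<longleftrightarrow> continuous_map C D g \<and> g ` topspace C = topspace D"
  by (auto simp: in_iota_r_def lifting_prop_iota_iff_surjective
      dest: continuous_map_image_subset_topspace)

lemma lifting_prop_surjection_embedding:
  assumes surj: "topspace B \<subseteq> f ` topspace A" and emb: "embedding_map X Y h"
  shows "lifting_prop A B f X Y h"
  unfolding lifting_prop_def
proof (intro allI impI, elim conjE)
  fix t b
  assume t: "continuous_map A X t" and b: "continuous_map B Y b"
    and square: "\<forall>x\<in>topspace A. h (t x) = b (f x)"
  let ?S = "subtopology Y (h ` topspace X)"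
  obtain g where "homeomorphic_maps X ?S h g"
    using emb unfolding embedding_map_def homeomorphic_map_maps by blast
  then have g: "continuous_map ?S X g" and gh: "\<And>x. x \<in> topspace X \<Longrightarrow> g (h x) = x"
    by (auto simp: homeomorphic_maps_def)
  have b_image: "b y \<in> h ` topspace X" if "y \<in> topspace B" for y
  proof -
    obtain x where "x \<in> topspace A" "y = f x" using surj \<open>y \<in> topspace B\<close> by blast
    then have "t x \<in> topspace X" "b y = h (t x)"
      using continuous_map_funspace[OF t] square by auto
    then show ?thesis by blast
  qed
  then have "continuous_map B ?S b"
    using b by (auto simp: continuous_map_in_subtopology)
  from this g have "continuous_map B X (g \<circ> b)"
    by (rule continuous_map_compose)
  moreover have "(g \<circ> b) (f x) = t x" if "x \<in> topspace A" for x
  proof -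
    have "t x \<in> topspace X" using continuous_map_funspace[OF t] that by blast
    with gh square that show ?thesis by force
  qed
  moreover have "h ((g \<circ> b) y) = b y" if "y \<in> topspace B" for y
    using b_image[OF that] gh by auto
  ultimately show "\<exists>d. continuous_map B X d \<and> (\<forall>x\<in>topspace A. d (f x) = t x)
      \<and> (\<forall>y\<in>topspace B. h (d y) = b y)"
    by blast
qed

lemma embedding_map_if_lifting_prop_corestriction:
  assumes h: "continuous_map X Y h"
    and lift: "lifting_prop X (subtopology Y (h ` topspace X)) h X Y h"
  shows "embedding_map X Y h"
proof -
  let ?S = "subtopology Y (h ` topspace X)"
  have "continuous_map X X id" "continuous_map ?S Y id" "\<forall>x\<in>topspace X. h (id x) = id (h x)"
    by (simp_all add: continuous_map_from_subtopology)
  with lift obtain d where d: "continuous_map ?S X d"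
    and dh: "\<forall>x\<in>topspace X. d (h x) = id x" and hd: "\<forall>y\<in>topspace ?S. h (d y) = id y"
    unfolding lifting_prop_def by blast
  have "continuous_map X ?S h"
    using h by (simp add: continuous_map_in_subtopology)
  with d dh hd have "homeomorphic_maps X ?S h d"
    by (simp add: homeomorphic_maps_def)
  then show ?thesis
    unfolding embedding_map_def homeomorphic_map_maps by blast
qed

theorem mainTheorem9:
  fixes X :: "'c topology" and Y :: "'d topology" and h :: "'c \<Rightarrow> 'd"
  shows "(embedding_map X Y h \<longrightarrow> in_iota_rr TYPE('a) TYPE('b) X Y h)
       \<and> (in_iota_rr TYPE('c) TYPE('d) X Y h \<longrightarrow> embedding_map X Y h)"
proof (intro conjI impI)
  assume emb: "embedding_map X Y h"
  then have "continuous_map X Y h"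
    by (metis embedding_map_def homeomorphic_imp_continuous_map continuous_map_in_subtopology)
  with emb show "in_iota_rr TYPE('a) TYPE('b) X Y h"
    by (auto simp: in_iota_rr_def in_iota_r_iff intro: lifting_prop_surjection_embedding)
next
  assume rr: "in_iota_rr TYPE('c) TYPE('d) X Y h"
  then have h: "continuous_map X Y h"
    by (simp add: in_iota_rr_def)
  then have "in_iota_r X (subtopology Y (h ` topspace X)) h"
    by (auto simp: in_iota_r_iff continuous_map_in_subtopology dest: continuous_map_image_subset_topspace)
  with rr have "lifting_prop X (subtopology Y (h ` topspace X)) h X Y h"
    by (simp add: in_iota_rr_def)
  with h show "embedding_map X Y h"
    by (rule embedding_map_if_lifting_prop_corestriction)
qed

end
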